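(* For every interaction matrix $K\in[0,1]^{d\times d}$ there exists $a_0>0$ such that every discrete time regulatory network with interaction matrix $K$ (and any compatible threshold and activation matrices) and contraction rate $a\in[0,a_0)$ satisfies coordinatewise injectivity.
   Context: An interaction matrix is $K\in[0,1]^{d\times d}$ with $\sum_iK_{i,j}=1$ for each $j$; a compatible activation matrix $s\in\{-1,0,1\}^{d\times d}$ and threshold matrix $T\in[0,1]^{d\times d}$ satisfy $s_{i,j}=0$ iff $K_{i,j}=0$ and $T_{i,j}=0$ iff $K_{i,j}=0$. The network with contraction rate $a\in[0,1]$ is $F(x)_j=ax_j+(1-a)\sum_iK_{i,j}H(s_{i,j}(x_i-T_{i,j}))$ on $[0,1]^d$, with $H(x)=0$ for $x\le 0$ and $1$ otherwise. For each $j$ let $\mathcal F_j=\{x\mapsto ax+(1-a)\sum_{i=1}^d\epsilon_iK_{i,j}:\ \epsilon\in\{0,1\}^d\}$, maps $[0,1]\to[0,1]$. The network satisfies coordinatewise injectivity if for each $j$ and all $f,f'\in\mathcal F_j$ with $f\ne f'$, $f([0,1])\cap f'([0,1])=\emptyset$. *)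

theory Defs
  imports Complex_Main
begin

text \<open>Matrices of size d x d are functions nat => nat => real (resp. int) with
indices ranging over {..<d}; entries outside this range are irrelevant.\<close>

definition interaction_matrix :: "nat \<Rightarrow> (nat \<Rightarrow> nat \<Rightarrow> real) \<Rightarrow> bool" where
  "interaction_matrix d K \<longleftrightarrow>
     (\<forall>i<d. \<forall>j<d. 0 \<le> K i j \<and> K i j \<le> 1) \<and> (\<forall>j<d. (\<Sum>i<d. K i j) = 1)"

definition compatible_activation :: "nat \<Rightarrow> (nat \<Rightarrow> nat \<Rightarrow> real) \<Rightarrow> (nat \<Rightarrow> nat \<Rightarrow> int) \<Rightarrow> bool" where
  "compatible_activation d K s \<longleftrightarrow>
     (\<forall>i<d. \<forall>j<d. s i j \<in> {-1, 0, 1} \<and> (s i j = 0 \<longleftrightarrow> K i j = 0))"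

definition compatible_threshold :: "nat \<Rightarrow> (nat \<Rightarrow> nat \<Rightarrow> real) \<Rightarrow> (nat \<Rightarrow> nat \<Rightarrow> real) \<Rightarrow> bool" where
  "compatible_threshold d K T \<longleftrightarrow>
     (\<forall>i<d. \<forall>j<d. 0 \<le> T i j \<and> T i j \<le> 1 \<and> (T i j = 0 \<longleftrightarrow> K i j = 0))"

definition heaviside :: "real \<Rightarrow> real" where
  "heaviside x = (if x \<le> 0 then 0 else 1)"

definition network :: "nat \<Rightarrow> (nat \<Rightarrow> nat \<Rightarrow> real) \<Rightarrow> (nat \<Rightarrow> nat \<Rightarrow> int) \<Rightarrow> (nat \<Rightarrow> nat \<Rightarrow> real)
    \<Rightarrow> real \<Rightarrow> (nat \<Rightarrow> real) \<Rightarrow> nat \<Rightarrow> real" where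
  "network d K s T a x j =
     a * x j + (1 - a) * (\<Sum>i<d. K i j * heaviside (of_int (s i j) * (x i - T i j)))"

definition coord_maps :: "nat \<Rightarrow> (nat \<Rightarrow> nat \<Rightarrow> real) \<Rightarrow> real \<Rightarrow> nat \<Rightarrow> (real \<Rightarrow> real) set" where
  "coord_maps d K a j =
     {(\<lambda>x. a * x + (1 - a) * (\<Sum>i<d. \<epsilon> i * K i j)) | \<epsilon>. \<forall>i<d. \<epsilon> i \<in> {0, 1}}"

definition coordinatewise_injective :: "nat \<Rightarrow> (nat \<Rightarrow> nat \<Rightarrow> real) \<Rightarrow> real \<Rightarrow> bool" where
  "coordinatewise_injective d K a \<longleftrightarrow>
     (\<forall>j<d. \<forall>f\<in>coord_maps d K a j. \<forall>f'\<in>coord_maps d K a j.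
        (\<exists>x\<in>{0..1}. f x \<noteq> f' x) \<longrightarrow> f ` {0..1} \<inter> f' ` {0..1} = {})"

end

theory Submission
  imports Defs "HOL-Analysis.Isolated"
begin

text \<open>Every map in \<open>\<F>\<^sub>j\<close> is \<open>x \<mapsto> a x + (1 - a) c\<close>, where \<open>c\<close> ranges over
  the finitely many subset sums of column \<open>j\<close> of \<open>K\<close>. Distinct maps have distinct \<open>c\<close>, and
  finitely many reals are separated by some \<open>\<delta> > 0\<close>. The images of \<open>[0,1]\<close> have length \<open>a\<close>
  and offsets \<open>(1 - a) c\<close>, so they are disjoint as soon as \<open>a < (1 - a) \<delta>\<close>, i.e. for
  \<open>a < \<delta> / (1 + \<delta>)\<close>.\<close>

definition column_subset_sums :: "nat \<Rightarrow> (nat \<Rightarrow> nat \<Rightarrow> real) \<Rightarrow> real set" where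
  "column_subset_sums d K = {\<Sum>i\<in>A. K i j | A j. A \<subseteq> {..<d} \<and> j < d}"

lemma finite_column_subset_sums: "finite (column_subset_sums d K)"
proof -
  have "column_subset_sums d K \<subseteq> (\<lambda>(A, j). \<Sum>i\<in>A. K i j) ` (Pow {..<d} \<times> {..<d})"
    unfolding column_subset_sums_def by auto
  then show ?thesis
    by (rule finite_subset) simp
qed

lemma sum_indicator_weights:
  fixes \<epsilon> :: "nat \<Rightarrow> real"
  assumes "\<forall>i<d. \<epsilon> i \<in> {0, 1}"
  shows "(\<Sum>i<d. \<epsilon> i * K i j) = (\<Sum>i\<in>{i\<in>{..<d}. \<epsilon> i = 1}. K i j)"
proof -
  have "(\<Sum>i<d. \<epsilon> i * K i j) = (\<Sum>i<d. if \<epsilon> i = 1 then K i j else 0)"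
    using assms by (intro sum.cong) auto
  also have "\<dots> = (\<Sum>i\<in>{i\<in>{..<d}. \<epsilon> i = 1}. K i j)"
    by (subst sum.inter_filter) auto
  finally show ?thesis .
qed

lemma coord_maps_eq_affine:
  assumes "f \<in> coord_maps d K a j" "j < d"
  obtains c where "c \<in> column_subset_sums d K" "f = (\<lambda>x. a * x + (1 - a) * c)"
proof -
  obtain \<epsilon> :: "nat \<Rightarrow> real" where \<epsilon>: "\<forall>i<d. \<epsilon> i \<in> {0, 1}"
    and f: "f = (\<lambda>x. a * x + (1 - a) * (\<Sum>i<d. \<epsilon> i * K i j))"
    using assms(1) unfolding coord_maps_def by auto
  have "(\<Sum>i<d. \<epsilon> i * K i j) \<in> column_subset_sums d K"
    unfolding sum_indicator_weights[OF \<epsilon>] column_subset_sums_def using \<open>j < d\<close> by blast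
  with f that show ?thesis by blast
qed

lemma affine_images_disjoint:
  fixes a c c' :: real
  assumes "0 \<le> a" "a \<le> 1" "a < (1 - a) * \<bar>c - c'\<bar>"
  shows "(\<lambda>x. a * x + (1 - a) * c) ` {0..1} \<inter> (\<lambda>x. a * x + (1 - a) * c') ` {0..1} = {}"
proof (rule ccontr)
  assume "\<not> ?thesis"
  then obtain x y :: real where xy: "x \<in> {0..1}" "y \<in> {0..1}"
    and eq: "a * x + (1 - a) * c = a * y + (1 - a) * c'"
    by blast
  have "(1 - a) * (c - c') = a * (y - x)"
    using eq by (simp add: algebra_simps)
  then have "(1 - a) * \<bar>c - c'\<bar> = a * \<bar>y - x\<bar>"
    using assms(1,2) by (metis abs_mult abs_of_nonneg diff_ge_0_iff_ge)
  also have "\<dots> \<le> a"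
    using xy assms(1) by (intro mult_left_le) auto
  finally show False
    using assms(3) by simp
qed

lemma coordinatewise_injective_if_separated:
  assumes "0 \<le> a" "a \<le> 1"
    and separated: "\<And>c c'. c \<in> column_subset_sums d K \<Longrightarrow> c' \<in> column_subset_sums d K \<Longrightarrow>
      c \<noteq> c' \<Longrightarrow> a < (1 - a) * \<bar>c - c'\<bar>"
  shows "coordinatewise_injective d K a"
  unfolding coordinatewise_injective_def
proof (intro allI impI ballI)
  fix j f f'
  assume "j < d" "f \<in> coord_maps d K a j" "f' \<in> coord_maps d K a j"
    and distinct: "\<exists>x\<in>{0..1}. f x \<noteq> f' x"
  then obtain c c' where c: "c \<in> column_subset_sums d K" "f = (\<lambda>x. a * x + (1 - a) * c)"
    and c': "c' \<in> column_subset_sums d K" "f' = (\<lambda>x. a * x + (1 - a) * c')"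
    by (metis coord_maps_eq_affine)
  have "c \<noteq> c'"
    using distinct c c' by auto
  show "f ` {0..1} \<inter> f' ` {0..1} = {}"
    unfolding c c' using assms(1,2) separated[OF c(1) c'(1) \<open>c \<noteq> c'\<close>]
    by (rule affine_images_disjoint)
qed

theorem mainTheorem5:
  fixes d :: nat and K :: "nat \<Rightarrow> nat \<Rightarrow> real"
  assumes "interaction_matrix d K"
  shows "\<exists>a0>0. \<forall>a. 0 \<le> a \<and> a < a0 \<and> a \<le> 1 \<longrightarrow>
           (\<forall>s T. compatible_activation d K s \<and> compatible_threshold d K T \<longrightarrow>
              coordinatewise_injective d K a)"
proof -
  obtain \<delta> :: real where "\<delta> > 0"
    and gap: "\<And>c c'. c \<in> column_subset_sums d K \<Longrightarrow> c' \<in> column_subset_sums d K \<Longrightarrow>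
      c \<noteq> c' \<Longrightarrow> \<delta> \<le> \<bar>c - c'\<bar>"
    using uniform_discrete_finite_iff[of "column_subset_sums d K"] finite_column_subset_sums
    unfolding uniform_discrete_def dist_real_def by (metis not_le)
  have "coordinatewise_injective d K a" if "0 \<le> a" "a < \<delta> / (1 + \<delta>)" "a \<le> 1" for a
  proof (rule coordinatewise_injective_if_separated[OF that(1,3)])
    fix c c' assume "c \<in> column_subset_sums d K" "c' \<in> column_subset_sums d K" "c \<noteq> c'"
    then have "(1 - a) * \<delta> \<le> (1 - a) * \<bar>c - c'\<bar>"
      using gap that(3) by (simp add: mult_left_mono)
    moreover have "a < (1 - a) * \<delta>"
      using that(2) \<open>\<delta> > 0\<close> by (simp add: field_simps)
    ultimately show "a < (1 - a) * \<bar>c - c'\<bar>" by linarith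
  qed
  moreover have "\<delta> / (1 + \<delta>) > 0"
    using \<open>\<delta> > 0\<close> by simp
  ultimately show ?thesis by blast
qed

end
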